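(* For $s\in\{1/2,1,3/2,\dots\}$, integers $0\le\sigma\le 2s$ and $-\sigma\le\mu\le\sigma$, \[ T^{(s)}_{\sigma\mu}=\sum_{k}A(s,\sigma,\mu,k)\,S_{(2s-\sigma,\;k-\mu,\;\sigma+\mu-2k,\;k)}, \] where the sum runs over integers $k$ with $\max(0,\mu)\le k\le(\sigma+\mu)/2$, and \[ A(s,\sigma,\mu,k)=\sqrt{\frac{(\sigma+\mu)!\,(\sigma-\mu)!}{(2\sigma)!}}\;\frac{l(s,\sigma)^{-1}(-1)^k\,2^{\mu-2k}\,\sigma!}{k!\,(k-\mu)!\,(\sigma+\mu-2k)!},\qquad l(s,\sigma)=\sqrt{\frac{(2s+\sigma+1)!\,(2s-\sigma)!}{(2\sigma+1)!}}\;\frac{\sigma!}{(2s)!}. \]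
   Context: $\mathcal{H}_s$ is the spin-$s$ space, identified with the fully symmetric subspace of $(\mathbb{C}^2)^{\otimes 2s}$ by identifying $|s,m\rangle$ with the normalized symmetric Dicke state having $s+m$ factors $|{\uparrow}\rangle=|1/2,1/2\rangle$ and $s-m$ factors $|{\downarrow}\rangle=|1/2,-1/2\rangle$; $\mathcal{P}_s$ is the orthogonal projection onto this subspace. The tensor operators are $T^{(s)}_{\sigma\mu}=\sum_{m,m'=-s}^{s}(-1)^{s-m'}C^{\sigma\mu}_{sm,\,s,-m'}|s,m\rangle\langle s,m'|$ with standard Clebsch–Gordan coefficients. Let $\sigma_0=\mathbb{1}_2$, $\sigma_z$ the Pauli matrix, and $\sigma_\pm=\sigma_x\pm i\sigma_y$. For a 4-tuple of non-negative integers $\vec\nu=(\nu_0,\nu_-,\nu_z,\nu_+)$ with sum $2s$, $S_{\vec\nu}$ is the operator on $\mathcal{H}_s$ given by $\mathcal{P}_s(\sigma_{\tau_1}\otimes\cdots\otimes\sigma_{\tau_{2s}})\mathcal{P}_s$ restricted to the symmetric subspace, where $\sigma_0,\sigma_-,\sigma_z,\sigma_+$ appear $\nu_0,\nu_-,\nu_z,\nu_+$ times respectively (the result is independent of the order). *)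

theory Defs
  imports Complex_Main
begin

text \<open>The spin s is encoded by n = 2s (a positive natural number).
  The basis vector |s,m> of H_s is indexed by j = s + m, 0 <= j <= n, so m = j - s.
  Operators on H_s are given by their matrix entries  op j j' = <s, j-s| op |s, j'-s>.\<close>

text \<open>Factorial of an integer argument (only used at non-negative arguments).\<close>
definition ifact :: "int \<Rightarrow> real" where
  "ifact x = fact (nat x)"

text \<open>Standard (Condon--Shortley) Clebsch--Gordan coefficient C^{J M}_{j1 m1, j2 m2},
  given by Racah's explicit formula. All arguments are DOUBLED:
  a = 2 j1, al = 2 m1, b = 2 j2, be = 2 m2, c = 2 J, ga = 2 M.\<close>
definition clebsch_gordan :: "int \<Rightarrow> int \<Rightarrow> int \<Rightarrow> int \<Rightarrow> int \<Rightarrow> int \<Rightarrow> real" where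
  "clebsch_gordan c ga a al b be =
    (if 0 \<le> a \<and> 0 \<le> b \<and> 0 \<le> c \<and> \<bar>al\<bar> \<le> a \<and> \<bar>be\<bar> \<le> b \<and> \<bar>ga\<bar> \<le> c
        \<and> even (a - al) \<and> even (b - be) \<and> even (c - ga) \<and> ga = al + be
        \<and> \<bar>a - b\<bar> \<le> c \<and> c \<le> a + b \<and> even (a + b + c)
     then sqrt (real_of_int (c + 1) * ifact ((c + a - b) div 2) * ifact ((c - a + b) div 2)
                 * ifact ((a + b - c) div 2) / ifact ((a + b + c) div 2 + 1))
        * sqrt (ifact ((c + ga) div 2) * ifact ((c - ga) div 2) * ifact ((a - al) div 2)
                 * ifact ((a + al) div 2) * ifact ((b - be) div 2) * ifact ((b + be) div 2))
        * (\<Sum>k\<in>{0..(a + b - c) div 2}.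
             (if 0 \<le> (a - al) div 2 - k \<and> 0 \<le> (b + be) div 2 - k
                 \<and> 0 \<le> (c - b + al) div 2 + k \<and> 0 \<le> (c - a - be) div 2 + k
              then (-1) ^ nat k / (ifact k * ifact ((a + b - c) div 2 - k)
                      * ifact ((a - al) div 2 - k) * ifact ((b + be) div 2 - k)
                      * ifact ((c - b + al) div 2 + k) * ifact ((c - a - be) div 2 + k))
              else 0))
     else 0)"

text \<open>Tensor operator T^{(s)}_{\<sigma>\<mu>} (n = 2s), matrix entry at (|s,m>, <s,m'|) with
  m = j - s, m' = j' - s:  (-1)^{s-m'} C^{\<sigma>\<mu>}_{s m, s, -m'}.  Note s - m' = n - j'.\<close>
definition tensor_op :: "nat \<Rightarrow> nat \<Rightarrow> int \<Rightarrow> nat \<Rightarrow> nat \<Rightarrow> complex" where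
  "tensor_op n \<sigma> \<mu> j j' =
     complex_of_real ((-1) ^ (n - j') *
       clebsch_gordan (2 * int \<sigma>) (2 * \<mu>) (int n) (2 * int j - int n) (int n) (int n - 2 * int j'))"

text \<open>Single-qubit operators sigma_0 = 1, sigma_- = sigma_x - i sigma_y, sigma_z,
  sigma_+ = sigma_x + i sigma_y. Basis of C^2: True = up, False = down;
  pauli_entry p x y = <x| sigma_p |y>.\<close>
datatype pauli = P0 | Pminus | Pz | Pplus

fun pauli_entry :: "pauli \<Rightarrow> bool \<Rightarrow> bool \<Rightarrow> complex" where
  "pauli_entry P0 x y = (if x = y then 1 else 0)"
| "pauli_entry Pz x y = (if x = y then (if x then 1 else -1) else 0)"
| "pauli_entry Pplus x y = (if x \<and> \<not> y then 2 else 0)"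
| "pauli_entry Pminus x y = (if \<not> x \<and> y then 2 else 0)"

definition qubit_basis :: "nat \<Rightarrow> bool list set" where
  "qubit_basis n = {bs. length bs = n}"

definition tensor_entry :: "pauli list \<Rightarrow> bool list \<Rightarrow> bool list \<Rightarrow> complex" where
  "tensor_entry ts bs cs = (\<Prod>i<length ts. pauli_entry (ts ! i) (bs ! i) (cs ! i))"

text \<open>Normalized symmetric Dicke state with j up-factors (j = s + m), as coordinates
  in the computational basis.\<close>
definition dicke :: "nat \<Rightarrow> nat \<Rightarrow> bool list \<Rightarrow> complex" where
  "dicke n j bs = (if length bs = n \<and> length (filter id bs) = j
                   then complex_of_real (1 / sqrt (real (n choose j))) else 0)"

text \<open>Word with nu0 copies of sigma_0, nu- of sigma_-, nuz of sigma_z, nu+ of sigma_+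
  (a fixed order; the operator S_nu does not depend on it).\<close>
definition pauli_word :: "nat \<Rightarrow> nat \<Rightarrow> nat \<Rightarrow> nat \<Rightarrow> pauli list" where
  "pauli_word a b c d = replicate a P0 @ replicate b Pminus @ replicate c Pz @ replicate d Pplus"

text \<open>S_nu = P_s (sigma_{t_1} \<otimes> ... \<otimes> sigma_{t_2s}) P_s restricted to H_s, as the matrix
  in the basis |s,m>:  entry (j,j') = <D_j| sigma_... |D_j'>, with 2s = nu0+nu-+nuz+nu+.\<close>
definition S_op :: "nat \<times> nat \<times> nat \<times> nat \<Rightarrow> nat \<Rightarrow> nat \<Rightarrow> complex" where
  "S_op nu j j' = (case nu of (a, b, c, d) \<Rightarrow>
     (let n = a + b + c + d; ts = pauli_word a b c d in
       \<Sum>bs\<in>qubit_basis n. \<Sum>cs\<in>qubit_basis n.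
         cnj (dicke n j bs) * tensor_entry ts bs cs * dicke n j' cs))"

definition l_coef :: "nat \<Rightarrow> nat \<Rightarrow> real" where
  "l_coef n \<sigma> = sqrt (fact (n + \<sigma> + 1) * fact (n - \<sigma>) / fact (2 * \<sigma> + 1)) * fact \<sigma> / fact n"

definition A_coef :: "nat \<Rightarrow> nat \<Rightarrow> int \<Rightarrow> int \<Rightarrow> real" where
  "A_coef n \<sigma> \<mu> k =
     sqrt (ifact (int \<sigma> + \<mu>) * ifact (int \<sigma> - \<mu>) / fact (2 * \<sigma>))
     * (inverse (l_coef n \<sigma>) * (-1) ^ nat \<bar>k\<bar> * 2 powr real_of_int (\<mu> - 2 * k) * fact \<sigma>
        / (ifact k * ifact (k - \<mu>) * ifact (int \<sigma> + \<mu> - 2 * k)))"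

end

theory Submission
  imports Defs
begin

(* Both sides are matrices in the Dicke basis, indexed by j = s + m.  Expanding the Dicke
   states, the entry (j, j') of S_nu is 1 / sqrt (C(2s, j) C(2s, j')) times the sum of the
   entries of the Pauli word between computational basis vectors with j and j' up-spins,
   and distributing the up-spins over the blocks of the word turns this into a single sum
   over q.  Substituting r = k + q, the k-th term on the right becomes a sum over r; summing
   over k first, the k-sum collapses by the Chu-Vandermonde identity, and what is left is
   Racah's single-sum formula for the Clebsch-Gordan coefficient, shifted by
   t = r - sigma + 2s - j.  The normalisation l(s, sigma) is exactly what makes the square
   roots match.
   Factorials enter through 1/x!, extended by 0 to negative integers x, so that every sum
   may run over the fixed window -2s <= r <= 4s containing all supports. *)

section \<open>Pauli words between basis states of fixed weight\<close>

definition up_count :: "bool list \<Rightarrow> int" where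
  "up_count bs = int (length (filter id bs))"

definition weight_entry :: "pauli list \<Rightarrow> int \<Rightarrow> int \<Rightarrow> complex" where
  "weight_entry ts j j' = (\<Sum>bs\<in>qubit_basis (length ts). \<Sum>cs\<in>qubit_basis (length ts).
     if up_count bs = j \<and> up_count cs = j' then tensor_entry ts bs cs else 0)"

lemma finite_qubit_basis [simp]: "finite (qubit_basis m)"
proof -
  have "qubit_basis m = {xs. set xs \<subseteq> UNIV \<and> length xs = m}"
    by (auto simp: qubit_basis_def)
  then show ?thesis
    using finite_lists_length_eq[of "UNIV :: bool set" m] by simp
qed

lemma qubit_basis_Suc:
  "qubit_basis (Suc m) = Cons True ` qubit_basis m \<union> Cons False ` qubit_basis m"
proof (rule set_eqI)
  fix xs
  show "xs \<in> qubit_basis (Suc m) \<longleftrightarrow> xs \<in> Cons True ` qubit_basis m \<union> Cons False ` qubit_basis m"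
    by (cases xs) (auto simp: qubit_basis_def)
qed

lemma sum_qubit_basis_Suc:
  "(\<Sum>bs\<in>qubit_basis (Suc m). g bs)
     = (\<Sum>bs\<in>qubit_basis m. g (True # bs)) + (\<Sum>bs\<in>qubit_basis m. g (False # bs))"
  unfolding qubit_basis_Suc by (subst sum.union_disjoint) (auto simp: sum.reindex)

lemma tensor_entry_Cons:
  "tensor_entry (t # ts) (x # bs) (y # cs) = pauli_entry t x y * tensor_entry ts bs cs"
  unfolding tensor_entry_def length_Cons prod.lessThan_Suc_shift by simp

lemma weight_entry_Nil: "weight_entry [] j j' = (if j = 0 \<and> j' = 0 then 1 else 0)"
proof -
  have basis: "qubit_basis 0 = {[]}"
    by (auto simp: qubit_basis_def)
  show ?thesis
    unfolding weight_entry_def list.size(3) basis by (simp add: up_count_def tensor_entry_def)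
qed

lemma weight_entry_Cons:
  "weight_entry (t # ts) j j' =
       pauli_entry t True True * weight_entry ts (j - 1) (j' - 1)
     + pauli_entry t True False * weight_entry ts (j - 1) j'
     + pauli_entry t False True * weight_entry ts j (j' - 1)
     + pauli_entry t False False * weight_entry ts j j'"
  unfolding weight_entry_def
  by (simp add: sum_qubit_basis_Suc tensor_entry_Cons up_count_def sum.distrib sum_distrib_left
      if_distrib[of "\<lambda>z. _ * z"] algebra_simps cong: if_cong)

lemma weight_entry_replicate_Pplus:
  "weight_entry (replicate d Pplus) j j' = (if j = int d \<and> j' = 0 then 2 ^ d else 0)"
  by (induction d arbitrary: j) (auto simp: weight_entry_Nil weight_entry_Cons)

lemma weight_entry_replicate_Pminus:
  "weight_entry (replicate b Pminus @ ts) j j' = 2 ^ b * weight_entry ts j (j' - int b)"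
  by (induction b arbitrary: j') (simp_all add: weight_entry_Cons algebra_simps)

lemma binomial_sum_Suc:
  fixes e :: "'a::comm_ring_1"
  shows "(\<Sum>q\<le>Suc c. of_nat (Suc c choose q) * e ^ (Suc c - q) * G q)
       = (\<Sum>q\<le>c. of_nat (c choose q) * e ^ (c - q) * G (Suc q))
         + e * (\<Sum>q\<le>c. of_nat (c choose q) * e ^ (c - q) * G q)"
proof -
  have "e * (\<Sum>q\<le>c. of_nat (c choose q) * e ^ (c - q) * G q)
      = (\<Sum>q\<le>Suc c. of_nat (c choose q) * e ^ (Suc c - q) * G q)"
    by (simp add: sum_distrib_left Suc_diff_le algebra_simps binomial_eq_0)
  then show ?thesis
    by (simp add: sum.atMost_Suc_shift algebra_simps sum.distrib del: sum.atMost_Suc)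
qed

lemma weight_entry_replicate_diagonal:
  assumes "pauli_entry t True True = 1" "pauli_entry t False False = e"
    and "pauli_entry t True False = 0" "pauli_entry t False True = 0"
  shows "weight_entry (replicate c t @ ts) j j'
    = (\<Sum>q\<le>c. of_nat (c choose q) * e ^ (c - q) * weight_entry ts (j - int q) (j' - int q))"
proof (induction c arbitrary: j j')
  case 0
  then show ?case by simp
next
  case (Suc c)
  have "weight_entry (replicate (Suc c) t @ ts) j j'
      = weight_entry (replicate c t @ ts) (j - 1) (j' - 1) + e * weight_entry (replicate c t @ ts) j j'"
    by (simp add: weight_entry_Cons assms)
  also have "\<dots> = (\<Sum>q\<le>Suc c. of_nat (Suc c choose q) * e ^ (Suc c - q)
                      * weight_entry ts (j - int q) (j' - int q))"
    unfolding Suc.IH binomial_sum_Suc by (simp add: algebra_simps)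
  finally show ?case .
qed

section \<open>Reciprocal factorials on the integers\<close>

definition inv_fact :: "int \<Rightarrow> real" where
  "inv_fact x = (if x < 0 then 0 else 1 / fact (nat x))"

definition minus_one_pow :: "int \<Rightarrow> real" where
  "minus_one_pow x = (if even x then 1 else -1)"

lemma inv_fact_neg [simp]: "x < 0 \<Longrightarrow> inv_fact x = 0"
  by (simp add: inv_fact_def)

lemma inv_fact_of_nat: "inv_fact (int m) = 1 / fact m"
  by (simp add: inv_fact_def)

lemma inv_fact_eq_inverse_ifact: "0 \<le> x \<Longrightarrow> inv_fact x = 1 / ifact x"
  by (simp add: inv_fact_def ifact_def)

lemma inv_fact_mult_inv_fact:
  assumes "0 \<le> k"
  shows "inv_fact k * inv_fact (int m - k) = real (m choose nat k) / fact m"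
proof (cases "k \<le> int m")
  case True
  then obtain i where i: "k = int i" "i \<le> m"
    using assms by (metis nonneg_int_cases of_nat_le_iff)
  then have "inv_fact (int m - k) = 1 / fact (m - i)"
    by (simp add: inv_fact_of_nat of_nat_diff[symmetric] del: of_nat_diff)
  with i show ?thesis
    by (simp add: inv_fact_of_nat binomial_fact)
next
  case False
  then show ?thesis
    by (simp add: binomial_eq_0 nat_less_iff)
qed

lemma fact_mult_inv_fact:
  "0 \<le> k \<Longrightarrow> fact m * inv_fact k * inv_fact (int m - k) = real (m choose nat k)"
  by (simp add: inv_fact_mult_inv_fact mult.assoc)

lemma minus_one_pow_add: "minus_one_pow (x + y) = minus_one_pow x * minus_one_pow y"
  by (auto simp: minus_one_pow_def)

lemma minus_one_pow_cong: "even (x - y) \<Longrightarrow> minus_one_pow x = minus_one_pow y"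
  by (auto simp: minus_one_pow_def)

lemma minus_one_pow_of_nat: "minus_one_pow (int m) = (-1) ^ m"
  by (simp add: minus_one_pow_def)

lemma power_nat_abs_minus_one: "(-1 :: real) ^ nat \<bar>x\<bar> = minus_one_pow x"
  by (simp add: minus_one_pow_def even_nat_iff)

lemma binomial_minus_one_power:
  assumes "q \<le> c"
  shows "real (c choose q) * (-1) ^ (c - q)
    = fact c * minus_one_pow (int c - int q) * inv_fact (int q) * inv_fact (int c - int q)"
proof -
  have sign: "minus_one_pow (int c - int q) = (-1) ^ (c - q)"
    using assms minus_one_pow_of_nat[of "c - q"] by (simp add: of_nat_diff)
  have "real (c choose q) = fact c * inv_fact (int q) * inv_fact (int c - int q)"
    using fact_mult_inv_fact[of "int q" c] by simp
  then show ?thesis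
    unfolding sign by (simp only: ac_simps)
qed

lemma sum_binomial_indicator:
  "(\<Sum>p\<le>a. real (a choose p) * (if int p = x then 1 else 0))
     = fact a * inv_fact x * inv_fact (int a - x)"
proof (cases "0 \<le> x \<and> x \<le> int a")
  case True
  then obtain i where i: "x = int i" "i \<le> a"
    by (metis nonneg_int_cases of_nat_le_iff)
  then have "(\<Sum>p\<le>a. real (a choose p) * (if int p = x then 1 else 0)) = real (a choose i)"
    by (simp add: if_distrib[of "\<lambda>z. _ * z"] cong: if_cong)
  with i show ?thesis
    using fact_mult_inv_fact[of x a] by simp
next
  case False
  then show ?thesis
    by (auto intro!: sum.neutral)
qed

lemma sum_interval_shift:
  fixes f :: "int \<Rightarrow> 'a::comm_monoid_add"
  assumes "\<And>x. x \<notin> {a..b} \<Longrightarrow> f x = 0" and "{a + d..b + d} \<subseteq> R" and "finite R"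
  shows "(\<Sum>x\<in>{a..b}. f x) = (\<Sum>r\<in>R. f (r - d))"
proof -
  have "(\<lambda>x. x + d) ` {a..b} = {a + d..b + d}"
    by (auto simp: image_iff intro!: bexI[of _ "_ - d"])
  then have "(\<Sum>x\<in>{a..b}. f x) = (\<Sum>r\<in>{a + d..b + d}. f (r - d))"
    by (metis (no_types, lifting) add_diff_cancel_right' inj_on_def sum.reindex_cong)
  also have "\<dots> = (\<Sum>r\<in>R. f (r - d))"
    using assms by (intro sum.mono_neutral_left) auto
  finally show ?thesis .
qed

lemma sum_inv_fact_vandermonde:
  fixes A B N :: int
  assumes "finite S" and "{0..A} \<subseteq> S"
  shows "(\<Sum>k\<in>S. inv_fact k * inv_fact (A - k) * inv_fact (N - k) * inv_fact (B - N + k))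
    = ifact (A + B) * inv_fact A * inv_fact B * inv_fact N * inv_fact (A + B - N)"
    (is "(\<Sum>k\<in>S. ?f k) = _")
proof (cases "A < 0 \<or> B < 0 \<or> N < 0")
  case True
  have "?f k = 0" for k
    using True by (cases "k < 0"; cases "A - k < 0"; cases "N - k < 0") auto
  then have "(\<Sum>k\<in>S. ?f k) = 0"
    by (simp only: sum.neutral_const)
  with True show ?thesis
    by auto
next
  case False
  then obtain a b m where abm: "A = int a" "B = int b" "N = int m"
    by (metis nonneg_int_cases not_less)
  have "(\<Sum>k\<in>S. ?f k) = (\<Sum>k\<in>{0..A}. ?f k)"
    using assms by (intro sum.mono_neutral_right) (auto simp: not_le)
  also have "\<dots> = (\<Sum>k\<in>{0..max A N}. ?f k)"
    by (intro sum.mono_neutral_left) auto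
  also have "\<dots> = (\<Sum>k\<in>{0..N}. ?f k)"
    by (intro sum.mono_neutral_right) auto
  also have "\<dots> = (\<Sum>i\<le>m. ?f (int i))"
    using abm sum.reindex[of int "{0..m}" ?f]
    by (simp add: image_int_atLeastAtMost atMost_atLeast0)
  also have "\<dots> = (\<Sum>i\<le>m. real (a choose i) * real (b choose (m - i))) / (fact a * fact b)"
  proof -
    have "?f (int i) = real (a choose i) / fact a * (real (b choose (m - i)) / fact b)"
      if "i \<le> m" for i
    proof -
      have "int b - int m + int i = int b - (int m - int i)"
        by simp
      then have "?f (int i) = (inv_fact (int i) * inv_fact (int a - int i))
          * (inv_fact (int m - int i) * inv_fact (int b - (int m - int i)))"
        unfolding abm by (simp only: ac_simps)
      then show ?thesis
        using that inv_fact_mult_inv_fact[of "int i" a] inv_fact_mult_inv_fact[of "int m - int i" b]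
        by (simp add: nat_diff_distrib)
    qed
    then show ?thesis
      by (simp add: sum_divide_distrib)
  qed
  also have "\<dots> = real ((a + b) choose m) / (fact a * fact b)"
    by (simp flip: vandermonde)
  also have "\<dots> = (fact (a + b) * inv_fact (int m) * inv_fact (int (a + b) - int m))
      * (inv_fact (int a) * inv_fact (int b))"
    by (subst fact_mult_inv_fact) (simp_all add: inv_fact_of_nat)
  also have "\<dots> = ifact (A + B) * inv_fact A * inv_fact B * inv_fact N * inv_fact (A + B - N)"
    using abm by (simp add: ifact_def nat_add_distrib ac_simps)
  finally show ?thesis .
qed

section \<open>Matrix entries of the operators S\<close>

text \<open>Of the up-spins of the bra, d sit under the factors sigma_+, q under the factors
  sigma_z (sign (-1)^(c-q)) and j - d - q under the factors sigma_0; the factors sigma_-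
  force j - d = j' - b.  The inverse factorials encode binomial coefficients.\<close>

definition word_weight_entry :: "nat \<Rightarrow> nat \<Rightarrow> nat \<Rightarrow> nat \<Rightarrow> int \<Rightarrow> int \<Rightarrow> real" where
  "word_weight_entry a b c d j j' =
     (if j - int d = j' - int b
      then 2 ^ (b + d) * fact a * fact c *
        (\<Sum>q\<in>{0..int c}. minus_one_pow (int c - q) * inv_fact q * inv_fact (int c - q)
           * inv_fact (j - int d - q) * inv_fact (int a - (j - int d - q)))
      else 0)"

lemma weight_entry_pauli_word_double_sum:
  "weight_entry (pauli_word a b c d) j j' = of_real (\<Sum>p\<le>a. \<Sum>q\<le>c.
     real (a choose p) * (real (c choose q) * (-1) ^ (c - q)) * 2 ^ (b + d)
     * (if j - int p - int q = int d \<and> j' - int p - int b - int q = 0 then 1 else 0))"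
proof -
  have block0: "weight_entry (replicate a P0 @ ts) j j'
      = (\<Sum>p\<le>a. of_nat (a choose p) * weight_entry ts (j - int p) (j' - int p))" for ts j j'
    using weight_entry_replicate_diagonal[of P0 1 a ts j j'] by simp
  have blockz: "weight_entry (replicate c Pz @ ts) j j'
      = (\<Sum>q\<le>c. of_nat (c choose q) * (-1) ^ (c - q) * weight_entry ts (j - int q) (j' - int q))"
    for ts j j'
    by (rule weight_entry_replicate_diagonal) simp_all
  show ?thesis
    unfolding pauli_word_def append_assoc block0 weight_entry_replicate_Pminus blockz
      weight_entry_replicate_Pplus
    by (simp add: sum_distrib_left power_add algebra_simps of_real_sum if_distrib[of complex_of_real]
        if_distrib[of "\<lambda>z. _ * z"] cong: if_cong)
qed

lemma weight_entry_pauli_word: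
  "weight_entry (pauli_word a b c d) j j' = of_real (word_weight_entry a b c d j j')"
proof (cases "j - int d = j' - int b")
  case True
  let ?f = "\<lambda>q. minus_one_pow (int c - q) * inv_fact q * inv_fact (int c - q)
              * inv_fact (j - int d - q) * inv_fact (int a - (j - int d - q))"
  have "(\<Sum>p\<le>a. \<Sum>q\<le>c. real (a choose p) * (real (c choose q) * (-1) ^ (c - q)) * 2 ^ (b + d)
          * (if j - int p - int q = int d \<and> j' - int p - int b - int q = 0 then 1 else 0))
      = (\<Sum>q\<le>c. (real (c choose q) * (-1) ^ (c - q)) * 2 ^ (b + d)
          * (\<Sum>p\<le>a. real (a choose p) * (if int p = j - int d - int q then 1 else 0)))"
    using True by (subst sum.swap) (auto simp: sum_distrib_left ac_simps intro!: sum.cong)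
  also have "\<dots> = 2 ^ (b + d) * fact a * fact c * (\<Sum>q\<le>c. ?f (int q))"
    by (simp add: sum_binomial_indicator binomial_minus_one_power sum_distrib_left ac_simps)
  also have "\<dots> = word_weight_entry a b c d j j'"
    using True sum.reindex[of int "{0..c}" ?f]
    by (simp add: word_weight_entry_def image_int_atLeastAtMost atMost_atLeast0)
  finally show ?thesis
    by (simp add: weight_entry_pauli_word_double_sum)
next
  case False
  then show ?thesis
    by (auto simp: weight_entry_pauli_word_double_sum word_weight_entry_def intro!: sum.neutral)
qed

lemma length_pauli_word: "length (pauli_word a b c d) = a + b + c + d"
  by (simp add: pauli_word_def)

lemma S_op_eq_word_weight_entry:
  assumes "a + b + c + d = n"
  shows "S_op (a, b, c, d) j j'
    = of_real (word_weight_entry a b c d (int j) (int j') / sqrt (real (n choose j) * real (n choose j')))"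
proof -
  let ?w = "complex_of_real (1 / sqrt (real (n choose j) * real (n choose j')))"
  have "S_op (a, b, c, d) j j' = (\<Sum>bs\<in>qubit_basis n. \<Sum>cs\<in>qubit_basis n.
      cnj (dicke n j bs) * tensor_entry (pauli_word a b c d) bs cs * dicke n j' cs)"
    using assms by (simp add: S_op_def)
  also have "\<dots> = (\<Sum>bs\<in>qubit_basis n. \<Sum>cs\<in>qubit_basis n. ?w *
      (if up_count bs = int j \<and> up_count cs = int j' then tensor_entry (pauli_word a b c d) bs cs else 0))"
    by (intro sum.cong refl) (auto simp: dicke_def qubit_basis_def up_count_def real_sqrt_mult)
  also have "\<dots> = ?w * weight_entry (pauli_word a b c d) (int j) (int j')"
    using assms by (simp add: weight_entry_def length_pauli_word sum_distrib_left)
  finally show ?thesis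
    by (simp add: weight_entry_pauli_word)
qed

section \<open>Racah's formula for the tensor operators\<close>

definition racah_sum :: "nat \<Rightarrow> nat \<Rightarrow> nat \<Rightarrow> nat \<Rightarrow> real" where
  "racah_sum n s j j' = (\<Sum>t\<in>{0..int n - int s}.
     minus_one_pow t * inv_fact t * inv_fact (int n - int s - t)
     * inv_fact (int n - int j - t) * inv_fact (int n - int j' - t)
     * inv_fact (int s - int n + int j + t) * inv_fact (int s - int n + int j' + t))"

lemma racah_summand_eq_inv_fact:
  assumes "0 \<le> t" and "0 \<le> x"
  shows "(if 0 \<le> y1 \<and> 0 \<le> y2 \<and> 0 \<le> y3 \<and> 0 \<le> y4
          then (-1) ^ nat t / (ifact t * ifact x * ifact y1 * ifact y2 * ifact y3 * ifact y4) else 0)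
    = minus_one_pow t * inv_fact t * inv_fact x * inv_fact y1 * inv_fact y2 * inv_fact y3 * inv_fact y4"
  using assms power_nat_abs_minus_one[of t] by (auto simp: inv_fact_eq_inverse_ifact)

lemma clebsch_gordan_eq_racah_sum:
  assumes "j \<le> n" "j' \<le> n" "s \<le> n" "\<bar>\<mu>\<bar> \<le> int s" "int j = int j' + \<mu>"
  shows "clebsch_gordan (2 * int s) (2 * \<mu>) (int n) (2 * int j - int n) (int n) (int n - 2 * int j')
    = sqrt (real (2 * s + 1) * fact s * fact s * fact (n - s) / fact (n + s + 1))
      * sqrt (ifact (int s + \<mu>) * ifact (int s - \<mu>) * fact (n - j) * fact j * fact j' * fact (n - j'))
      * racah_sum n s j j'"
proof -
  have selection_rules:
    "0 \<le> int n \<and> 0 \<le> int n \<and> 0 \<le> 2 * int s \<and> \<bar>2 * int j - int n\<bar> \<le> int n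
     \<and> \<bar>int n - 2 * int j'\<bar> \<le> int n \<and> \<bar>2 * \<mu>\<bar> \<le> 2 * int s
     \<and> even (int n - (2 * int j - int n)) \<and> even (int n - (int n - 2 * int j'))
     \<and> even (2 * int s - 2 * \<mu>) \<and> 2 * \<mu> = (2 * int j - int n) + (int n - 2 * int j')
     \<and> \<bar>int n - int n\<bar> \<le> 2 * int s \<and> 2 * int s \<le> int n + int n \<and> even (int n + int n + 2 * int s)"
    using assms by auto
  have halves:
    "(2 * int s + int n - int n) div 2 = int s" "(2 * int s - int n + int n) div 2 = int s"
    "(int n + int n - 2 * int s) div 2 = int n - int s" "(int n + int n + 2 * int s) div 2 = int n + int s"
    "(2 * int s + 2 * \<mu>) div 2 = int s + \<mu>" "(2 * int s - 2 * \<mu>) div 2 = int s - \<mu>"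
    "(int n - (2 * int j - int n)) div 2 = int n - int j" "(int n + (2 * int j - int n)) div 2 = int j"
    "(int n - (int n - 2 * int j')) div 2 = int j'" "(int n + (int n - 2 * int j')) div 2 = int n - int j'"
    "(2 * int s - int n + (2 * int j - int n)) div 2 = int s - int n + int j"
    "(2 * int s - int n - (int n - 2 * int j')) div 2 = int s - int n + int j'"
    by simp_all
  have facts: "ifact (int s) = fact s" "ifact (int n - int s) = fact (n - s)"
    "ifact (int n + int s + 1) = fact (n + s + 1)" "ifact (int n - int j) = fact (n - j)"
    "ifact (int n - int j') = fact (n - j')" "ifact (int j) = fact j" "ifact (int j') = fact j'"
    "real_of_int (2 * int s + 1) = real (2 * s + 1)"
    using assms(1-3) by (simp_all add: ifact_def nat_diff_distrib nat_add_distrib)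
  show ?thesis
    unfolding clebsch_gordan_def if_P[OF selection_rules] halves facts racah_sum_def
    by (intro arg_cong[where f = "\<lambda>x. _ * x"] sum.cong refl racah_summand_eq_inv_fact) auto
qed

definition A_prefactor :: "nat \<Rightarrow> nat \<Rightarrow> int \<Rightarrow> real" where
  "A_prefactor n s \<mu> =
     sqrt (ifact (int s + \<mu>) * ifact (int s - \<mu>) / fact (2 * s)) * inverse (l_coef n s) * fact s"

lemma clebsch_gordan_normalisation:
  assumes "s \<le> n" "j \<le> n" "j' \<le> n"
  shows "sqrt (real (2 * s + 1) * fact s * fact s * fact (n - s) / fact (n + s + 1))
      * sqrt (ifact (int s + \<mu>) * ifact (int s - \<mu>) * fact (n - j) * fact j * fact j' * fact (n - j'))
    = A_prefactor n s \<mu> * fact (n - s) * fact s / sqrt (real (n choose j) * real (n choose j'))"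
proof -
  define X where "X = ifact (int s + \<mu>) * ifact (int s - \<mu>)"
  have "X \<ge> 0"
    by (simp add: X_def ifact_def)
  have binomials: "real (n choose j) = fact n / (fact j * fact (n - j))"
    "real (n choose j') = fact n / (fact j' * fact (n - j'))"
    using assms by (simp_all add: binomial_fact)
  have fact_odd: "fact (2 * s + 1) = real (2 * s + 1) * (fact (2 * s) :: real)"
    by simp
  let ?rhs = "A_prefactor n s \<mu> * fact (n - s) * fact s / sqrt (real (n choose j) * real (n choose j'))"
  have "?rhs\<^sup>2 = real (2 * s + 1) * fact s * fact s * fact (n - s) / fact (n + s + 1)
      * (X * fact (n - j) * fact j * fact j' * fact (n - j'))"
    using \<open>X \<ge> 0\<close>
    unfolding A_prefactor_def l_coef_def X_def[symmetric] binomials fact_odd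
    by (simp add: power_mult_distrib power_divide power_inverse real_sqrt_mult field_simps
        power2_eq_square del: fact_Suc)
  moreover have "?rhs \<ge> 0"
    using \<open>X \<ge> 0\<close> by (simp add: A_prefactor_def l_coef_def X_def[symmetric])
  ultimately show ?thesis
    by (simp add: X_def real_sqrt_mult[symmetric] real_sqrt_unique)
qed

section \<open>Expansion of Racah's sum\<close>

definition racah_term :: "nat \<Rightarrow> nat \<Rightarrow> int \<Rightarrow> nat \<Rightarrow> int \<Rightarrow> real" where
  "racah_term n s \<mu> j r = minus_one_pow (int s + \<mu> - r)
     * inv_fact r * inv_fact (int s - r) * inv_fact (int s + \<mu> - r) * inv_fact (r - \<mu>)
     * inv_fact (int j - r) * inv_fact (int n - int s - int j + r)"

definition expanded_racah_term :: "nat \<Rightarrow> nat \<Rightarrow> int \<Rightarrow> nat \<Rightarrow> int \<Rightarrow> int \<Rightarrow> real" where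
  "expanded_racah_term n s \<mu> j k r = minus_one_pow (int s + \<mu> - r)
     * inv_fact k * inv_fact (r - k) * inv_fact (k - \<mu>) * inv_fact (int s + \<mu> - k - r)
     * inv_fact (int j - r) * inv_fact (int n - int s - int j + r)"

lemma racah_sum_eq_sum_racah_term:
  assumes "s \<le> n" "j \<le> n" "j' \<le> n" "int j = int j' + \<mu>"
  shows "(-1) ^ (n - j') * racah_sum n s j j' = (\<Sum>r\<in>{- int n..2 * int n}. racah_term n s \<mu> j r)"
proof -
  define d where "d = int s - int n + int j"
  define f where "f t = minus_one_pow t * inv_fact t * inv_fact (int n - int s - t)
     * inv_fact (int n - int j - t) * inv_fact (int n - int j' - t)
     * inv_fact (int s - int n + int j + t) * inv_fact (int s - int n + int j' + t)" for t
  have "racah_sum n s j j' = (\<Sum>r\<in>{- int n..2 * int n}. f (r - d))"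
    unfolding racah_sum_def f_def[symmetric]
  proof (rule sum_interval_shift)
    show "f t = 0" if "t \<notin> {0..int n - int s}" for t
      using that by (cases "t < 0") (auto simp: f_def)
  qed (use assms in \<open>auto simp: d_def\<close>)
  moreover have "(-1) ^ (n - j') * f (r - d) = racah_term n s \<mu> j r" for r
  proof -
    have "(-1) ^ (n - j') = minus_one_pow (int n - int j')"
      using assms minus_one_pow_of_nat[of "n - j'"] by (simp add: of_nat_diff)
    moreover have "minus_one_pow (int n - int j') * minus_one_pow (r - d) = minus_one_pow (int s + \<mu> - r)"
      unfolding minus_one_pow_add[symmetric] using assms by (intro minus_one_pow_cong) (simp add: d_def)
    moreover have "f (r - d) = minus_one_pow (r - d) * (inv_fact r * inv_fact (int s - r)
        * inv_fact (int s + \<mu> - r) * inv_fact (r - \<mu>) * inv_fact (int j - r) * inv_fact (int n - int s - int j + r))"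
      using assms(4) by (simp add: f_def d_def algebra_simps)
    ultimately show ?thesis
      by (simp add: racah_term_def mult.assoc[symmetric])
  qed
  ultimately show ?thesis
    by (simp add: sum_distrib_left)
qed

lemma sum_expanded_racah_term:
  assumes "r \<le> 2 * int n"
  shows "(\<Sum>k\<in>{- int n..2 * int n}. expanded_racah_term n s \<mu> j k r) = fact s * racah_term n s \<mu> j r"
proof -
  let ?A = r and ?B = "int s - r" and ?N = "int s + \<mu> - r"
  let ?c = "minus_one_pow (int s + \<mu> - r) * inv_fact (int j - r) * inv_fact (int n - int s - int j + r)"
  have "(\<Sum>k\<in>{- int n..2 * int n}. expanded_racah_term n s \<mu> j k r)
      = ?c * (\<Sum>k\<in>{- int n..2 * int n}.
               inv_fact k * inv_fact (?A - k) * inv_fact (?N - k) * inv_fact (?B - ?N + k))"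
    unfolding sum_distrib_left by (intro sum.cong refl) (simp add: expanded_racah_term_def algebra_simps)
  also have "\<dots> = ?c * (ifact (?A + ?B) * inv_fact ?A * inv_fact ?B * inv_fact ?N * inv_fact (?A + ?B - ?N))"
    using assms by (subst sum_inv_fact_vandermonde) auto
  finally show ?thesis
    by (simp add: racah_term_def ifact_def algebra_simps)
qed

lemma expanded_racah_term_eq_0:
  assumes "\<not> (max 0 \<mu> \<le> k \<and> 2 * k \<le> int s + \<mu>)"
  shows "expanded_racah_term n s \<mu> j k r = 0"
proof -
  have "k < 0 \<or> k < \<mu> \<or> r - k < 0 \<or> int s + \<mu> - k - r < 0"
    using assms by linarith
  then show ?thesis
    by (auto simp: expanded_racah_term_def)
qed

lemma racah_sum_expansion:
  assumes "s \<le> n" "\<bar>\<mu>\<bar> \<le> int s" "j \<le> n" "j' \<le> n" "int j = int j' + \<mu>"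
  shows "(-1) ^ (n - j') * fact s * racah_sum n s j j'
    = (\<Sum>k | max 0 \<mu> \<le> k \<and> 2 * k \<le> int s + \<mu>. \<Sum>r\<in>{- int n..2 * int n}. expanded_racah_term n s \<mu> j k r)"
proof -
  let ?W = "{- int n..2 * int n}"
  have "(\<Sum>k | max 0 \<mu> \<le> k \<and> 2 * k \<le> int s + \<mu>. \<Sum>r\<in>?W. expanded_racah_term n s \<mu> j k r)
      = (\<Sum>k\<in>?W. \<Sum>r\<in>?W. expanded_racah_term n s \<mu> j k r)"
    using assms(1,2) by (intro sum.mono_neutral_left) (auto simp: expanded_racah_term_eq_0)
  also have "\<dots> = (\<Sum>r\<in>?W. \<Sum>k\<in>?W. expanded_racah_term n s \<mu> j k r)"
    by (rule sum.swap)
  also have "\<dots> = fact s * (\<Sum>r\<in>?W. racah_term n s \<mu> j r)"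
    by (simp add: sum_expanded_racah_term sum_distrib_left)
  also have "\<dots> = (-1) ^ (n - j') * fact s * racah_sum n s j j'"
    using assms by (simp add: racah_sum_eq_sum_racah_term)
  finally show ?thesis ..
qed

lemma A_coef_eq_A_prefactor:
  assumes "0 \<le> k" "\<mu> \<le> k" "2 * k \<le> int s + \<mu>"
  shows "A_coef n s \<mu> k = A_prefactor n s \<mu> * 2 powr real_of_int (\<mu> - 2 * k)
    * minus_one_pow k * inv_fact k * inv_fact (k - \<mu>) * inv_fact (int s + \<mu> - 2 * k)"
  using assms power_nat_abs_minus_one[of k]
  by (simp add: A_coef_def A_prefactor_def inv_fact_eq_inverse_ifact)

lemma word_weight_entry_eq_sum_expanded_racah_term:
  assumes "s \<le> n" "0 \<le> k" "\<mu> \<le> k" "2 * k \<le> int s + \<mu>" "int j = int j' + \<mu>"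
  shows "minus_one_pow k * inv_fact k * inv_fact (k - \<mu>)
      * word_weight_entry (n - s) (nat (k - \<mu>)) (nat (int s + \<mu> - 2 * k)) (nat k) (int j) (int j')
    = 2 powr real_of_int (2 * k - \<mu>) * fact (n - s) * fact (nat (int s + \<mu> - 2 * k))
      * (\<Sum>r\<in>{- int n..2 * int n}. expanded_racah_term n s \<mu> j k r)"
proof -
  define c where "c = nat (int s + \<mu> - 2 * k)"
  have c: "int c = int s + \<mu> - 2 * k"
    using assms by (simp add: c_def)
  define g where "g q = minus_one_pow (int c - q) * inv_fact q * inv_fact (int c - q)
    * inv_fact (int j - k - q) * inv_fact (int n - int s - (int j - k - q))" for q
  have "(2 :: real) ^ (nat (k - \<mu>) + nat k) = 2 powr real_of_int (2 * k - \<mu>)"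
    using assms by (simp add: powr_realpow[symmetric])
  then have entry: "word_weight_entry (n - s) (nat (k - \<mu>)) c (nat k) (int j) (int j')
      = 2 powr real_of_int (2 * k - \<mu>) * fact (n - s) * fact c * (\<Sum>q\<in>{0..int c}. g q)"
    using assms by (simp add: word_weight_entry_def g_def of_nat_diff)
  have shift: "(\<Sum>q\<in>{0..int c}. g q) = (\<Sum>r\<in>{- int n..2 * int n}. g (r - k))"
  proof (rule sum_interval_shift)
    show "g q = 0" if "q \<notin> {0..int c}" for q
      using that by (cases "q < 0") (auto simp: g_def)
  qed (use assms c in auto)
  have summand: "minus_one_pow k * inv_fact k * inv_fact (k - \<mu>) * g (r - k) = expanded_racah_term n s \<mu> j k r"
    for r
  proof -
    have "minus_one_pow k * minus_one_pow (int c - (r - k)) = minus_one_pow (int s + \<mu> - r)"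
      unfolding minus_one_pow_add[symmetric] c by (simp add: algebra_simps)
    moreover have "g (r - k) = minus_one_pow (int c - (r - k)) * (inv_fact (r - k)
        * inv_fact (int s + \<mu> - k - r) * inv_fact (int j - r) * inv_fact (int n - int s - int j + r))"
      unfolding g_def c by (simp add: algebra_simps)
    ultimately show ?thesis
      by (simp add: expanded_racah_term_def mult.assoc[symmetric])
  qed
  have "minus_one_pow k * inv_fact k * inv_fact (k - \<mu>)
      * word_weight_entry (n - s) (nat (k - \<mu>)) c (nat k) (int j) (int j')
    = 2 powr real_of_int (2 * k - \<mu>) * fact (n - s) * fact c
      * (\<Sum>r\<in>{- int n..2 * int n}. minus_one_pow k * inv_fact k * inv_fact (k - \<mu>) * g (r - k))"
    unfolding entry shift by (simp add: sum_distrib_left ac_simps)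
  then show ?thesis
    unfolding summand c_def .
qed

lemma A_coef_mult_word_weight_entry:
  assumes "s \<le> n" "max 0 \<mu> \<le> k" "2 * k \<le> int s + \<mu>" "int j = int j' + \<mu>"
  shows "A_coef n s \<mu> k
      * word_weight_entry (n - s) (nat (k - \<mu>)) (nat (int s + \<mu> - 2 * k)) (nat k) (int j) (int j')
    = A_prefactor n s \<mu> * fact (n - s) * (\<Sum>r\<in>{- int n..2 * int n}. expanded_racah_term n s \<mu> j k r)"
proof -
  let ?W = "word_weight_entry (n - s) (nat (k - \<mu>)) (nat (int s + \<mu> - 2 * k)) (nat k) (int j) (int j')"
  let ?E = "\<Sum>r\<in>{- int n..2 * int n}. expanded_racah_term n s \<mu> j k r"
  define c where "c = nat (int s + \<mu> - 2 * k)"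
  have "A_coef n s \<mu> k * ?W = A_prefactor n s \<mu> * (2 powr real_of_int (\<mu> - 2 * k) * inv_fact (int s + \<mu> - 2 * k))
      * (minus_one_pow k * inv_fact k * inv_fact (k - \<mu>) * ?W)"
    using assms by (simp add: A_coef_eq_A_prefactor ac_simps)
  also have "\<dots> = A_prefactor n s \<mu> * fact (n - s) * ?E
      * ((2 powr real_of_int (\<mu> - 2 * k) * 2 powr real_of_int (2 * k - \<mu>)) * (inv_fact (int s + \<mu> - 2 * k) * fact c))"
    using assms by (subst word_weight_entry_eq_sum_expanded_racah_term[of s n k \<mu> j j'])
      (simp_all add: c_def ac_simps)
  also have "\<dots> = A_prefactor n s \<mu> * fact (n - s) * ?E"
    using assms by (simp add: powr_add[symmetric] c_def inv_fact_def)
  finally show ?thesis .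
qed

lemma clebsch_gordan_expansion:
  assumes "s \<le> n" "\<bar>\<mu>\<bar> \<le> int s" "j \<le> n" "j' \<le> n"
  shows "(-1) ^ (n - j') * clebsch_gordan (2 * int s) (2 * \<mu>) (int n) (2 * int j - int n) (int n) (int n - 2 * int j')
    = (\<Sum>k | max 0 \<mu> \<le> k \<and> 2 * k \<le> int s + \<mu>. A_coef n s \<mu> k
        * word_weight_entry (n - s) (nat (k - \<mu>)) (nat (int s + \<mu> - 2 * k)) (nat k) (int j) (int j')
        / sqrt (real (n choose j) * real (n choose j')))"
proof (cases "int j = int j' + \<mu>")
  case True
  let ?K = "{k. max 0 \<mu> \<le> k \<and> 2 * k \<le> int s + \<mu>}"
  let ?c = "A_prefactor n s \<mu> * fact (n - s) / sqrt (real (n choose j) * real (n choose j'))"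
  have "(-1) ^ (n - j') * clebsch_gordan (2 * int s) (2 * \<mu>) (int n) (2 * int j - int n) (int n) (int n - 2 * int j')
      = ?c * ((-1) ^ (n - j') * fact s * racah_sum n s j j')"
    unfolding clebsch_gordan_eq_racah_sum[OF assms(3,4,1,2) True]
      clebsch_gordan_normalisation[OF assms(1,3,4)]
    by (simp add: ac_simps)
  also have "\<dots> = (\<Sum>k\<in>?K. ?c * (\<Sum>r\<in>{- int n..2 * int n}. expanded_racah_term n s \<mu> j k r))"
    using assms True by (simp add: racah_sum_expansion sum_distrib_left)
  also have "\<dots> = (\<Sum>k\<in>?K. A_coef n s \<mu> k
      * word_weight_entry (n - s) (nat (k - \<mu>)) (nat (int s + \<mu> - 2 * k)) (nat k) (int j) (int j')
      / sqrt (real (n choose j) * real (n choose j')))"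
    by (intro sum.cong refl) (simp add: A_coef_mult_word_weight_entry[OF assms(1) _ _ True])
  finally show ?thesis .
next
  case False
  then show ?thesis
    by (auto simp: clebsch_gordan_def word_weight_entry_def intro!: sum.neutral)
qed

theorem mainTheorem5:
  fixes n \<sigma> :: nat and \<mu> :: int
  assumes "1 \<le> n" and "\<sigma> \<le> n" and "\<bar>\<mu>\<bar> \<le> int \<sigma>"
  shows "\<forall>j\<le>n. \<forall>j'\<le>n.
    tensor_op n \<sigma> \<mu> j j' =
      (\<Sum>k | max 0 \<mu> \<le> k \<and> 2 * k \<le> int \<sigma> + \<mu>.
         complex_of_real (A_coef n \<sigma> \<mu> k) *
         S_op (n - \<sigma>, nat (k - \<mu>), nat (int \<sigma> + \<mu> - 2 * k), nat k) j j')"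
proof (intro allI impI)
  fix j j' assume "j \<le> n" "j' \<le> n"
  have "S_op (n - \<sigma>, nat (k - \<mu>), nat (int \<sigma> + \<mu> - 2 * k), nat k) j j'
      = of_real (word_weight_entry (n - \<sigma>) (nat (k - \<mu>)) (nat (int \<sigma> + \<mu> - 2 * k)) (nat k) (int j) (int j')
          / sqrt (real (n choose j) * real (n choose j')))"
    if "max 0 \<mu> \<le> k \<and> 2 * k \<le> int \<sigma> + \<mu>" for k
    using that assms by (intro S_op_eq_word_weight_entry) auto
  then show "tensor_op n \<sigma> \<mu> j j' =
      (\<Sum>k | max 0 \<mu> \<le> k \<and> 2 * k \<le> int \<sigma> + \<mu>.
         complex_of_real (A_coef n \<sigma> \<mu> k) *
         S_op (n - \<sigma>, nat (k - \<mu>), nat (int \<sigma> + \<mu> - 2 * k), nat k) j j')"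
    using assms \<open>j \<le> n\<close> \<open>j' \<le> n\<close>
    by (simp add: tensor_op_def clebsch_gordan_expansion of_real_sum)
qed

end
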